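(* Let $\tilde\omega=(\ell_1/t_1,\dots,\ell_\nu/t_\nu)\in\mathbb Q^\nu\setminus\{0\}$ with $\ell_j\in\mathbb Z$, $t_j\in\mathbb Z_{\ge1}$. Suppose $0<a_0<1$, $\nu<b_0<\infty$, $\bar R_0>0$ with $\bar R_0^{\,b_0}>\prod_jt_j$, and $|n\cdot\tilde\omega|\ge a_0|n|^{-b_0}$ for all $n\in\mathbb Z^\nu$ with $0<|n|\le\bar R_0$. Then $|\mathfrak n\tilde\omega|\ge a_0|\mathfrak n|^{-b_0}$ for every $\mathfrak n\in\mathfrak Z(\tilde\omega)\setminus\{0\}$.
   Context: $|\cdot|$ is a fixed norm on $\mathbb R^\nu$ restricted to $\mathbb Z^\nu$, and $n\cdot\tilde\omega$ is the usual dot product. $\mathfrak N(\tilde\omega)=\{n\in\mathbb Z^\nu:n\cdot\tilde\omega=0\}$ and $\mathfrak Z(\tilde\omega)=\mathbb Z^\nu/\mathfrak N(\tilde\omega)$. For a coset $\mathfrak n$, $|\mathfrak n|=\min\{|n|:n\in\mathfrak n\}$ and $\mathfrak n\tilde\omega:=n\cdot\tilde\omega$ for any $n\in\mathfrak n$ (independent of the choice). *)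

theory Defs
  imports "HOL-Analysis.Analysis"
begin

definition is_norm :: "(real ^ 'n \<Rightarrow> real) \<Rightarrow> bool" where
  "is_norm N \<longleftrightarrow>
     (\<forall>x. N x \<ge> 0) \<and> (\<forall>x. N x = 0 \<longleftrightarrow> x = 0) \<and>
     (\<forall>c x. N (c *\<^sub>R x) = \<bar>c\<bar> * N x) \<and>
     (\<forall>x y. N (x + y) \<le> N x + N y)"

definition int_vecs :: "(real ^ 'n) set" where
  "int_vecs = {n. \<forall>i. n $ i \<in> \<int>}"

definition resonant :: "real ^ 'n \<Rightarrow> (real ^ 'n) set" where
  "resonant \<omega> = {n \<in> int_vecs. n \<bullet> \<omega> = 0}"

definition coset_of :: "real ^ 'n \<Rightarrow> real ^ 'n \<Rightarrow> (real ^ 'n) set" where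
  "coset_of \<omega> n = {m \<in> int_vecs. m - n \<in> resonant \<omega>}"

definition quot :: "real ^ 'n \<Rightarrow> (real ^ 'n) set set" where
  "quot \<omega> = coset_of \<omega> ` int_vecs"

text \<open>|coset| = min of N over the coset (the minimum is attained; Inf is used).\<close>
definition coset_norm :: "(real ^ 'n \<Rightarrow> real) \<Rightarrow> (real ^ 'n) set \<Rightarrow> real" where
  "coset_norm N C = Inf (N ` C)"

text \<open>coset omega := n . omega for any representative n (well defined).\<close>
definition coset_val :: "real ^ 'n \<Rightarrow> (real ^ 'n) set \<Rightarrow> real" where
  "coset_val \<omega> C = (SOME n. n \<in> C) \<bullet> \<omega>"

end

theory Submission
  imports Defs
begin

(* Write omega = (l_j / t_j)_j and T = prod_j t_j.  Clearing denominators,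
   T * (m . omega) is an integer for every integer vector m, so every nonzero value
   m . omega has modulus at least 1/T.  Since R0^b0 > T, every integer vector m of norm
   larger than R0 satisfies a0 |m|^-b0 < R0^-b0 < 1/T <= |m . omega|; together with the
   hypothesis for |m| <= R0 this gives |m . omega| >= a0 |m|^-b0 for ALL integer m with
   m . omega <> 0.  A nonzero coset C consists of integer vectors sharing one nonzero
   value v = m . omega, so |v| >= a0 |m|^-b0 for all m in C, and a monotonicity argument
   for y |-> a0 y^-b0 passes this bound to the infimum |C| of the norms over C. *)

abbreviation rat_vec :: "('n::finite \<Rightarrow> int) \<Rightarrow> ('n \<Rightarrow> int) \<Rightarrow> real ^ 'n" where
  "rat_vec l t \<equiv> \<chi> j. real_of_int (l j) / real_of_int (t j)"

lemma denominators_clear_inner: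
  fixes l t :: "'n::finite \<Rightarrow> int" and m :: "real ^ 'n"
  assumes t_pos: "\<forall>j. t j \<ge> 1" and m: "m \<in> int_vecs"
  shows "real_of_int (\<Prod>j\<in>UNIV. t j) * (m \<bullet> rat_vec l t) \<in> \<int>"
proof -
  have "real_of_int (\<Prod>j\<in>UNIV. t j) * (m \<bullet> rat_vec l t)
      = (\<Sum>j\<in>UNIV. m $ j * (real_of_int (l j) * real_of_int (\<Prod>i\<in>UNIV - {j}. t i)))"
  proof -
    have "real_of_int (\<Prod>j\<in>UNIV. t j) * (m $ j * (real_of_int (l j) / real_of_int (t j)))
        = m $ j * (real_of_int (l j) * real_of_int (\<Prod>i\<in>UNIV - {j}. t i))" for j
    proof -
      have "real_of_int (t j) \<noteq> 0" using t_pos by (metis of_int_0_eq_iff not_one_le_zero)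
      moreover have "(\<Prod>j\<in>UNIV. t j) = t j * (\<Prod>i\<in>UNIV - {j}. t i)"
        by (simp add: prod.remove)
      ultimately show ?thesis by (simp add: field_simps)
    qed
    then show ?thesis by (simp add: inner_vec_def sum_distrib_left)
  qed
  also have "\<dots> \<in> \<int>"
    using m by (intro Ints_sum Ints_mult) (auto simp: int_vecs_def)
  finally show ?thesis .
qed

lemma rational_inner_gap:
  fixes l t :: "'n::finite \<Rightarrow> int" and m :: "real ^ 'n"
  assumes t_pos: "\<forall>j. t j \<ge> 1" and m: "m \<in> int_vecs" and nz: "m \<bullet> rat_vec l t \<noteq> 0"
  shows "\<bar>m \<bullet> rat_vec l t\<bar> \<ge> 1 / real_of_int (\<Prod>j\<in>UNIV. t j)"
proof -
  define T where "T = real_of_int (\<Prod>j\<in>UNIV. t j)"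
  have "(\<Prod>j\<in>UNIV. t j) \<ge> 1" using t_pos by (intro prod_ge_1) auto
  then have T_ge1: "T \<ge> 1" unfolding T_def by (metis of_int_1_le_iff)
  have "T * (m \<bullet> rat_vec l t) \<in> \<int>"
    unfolding T_def using denominators_clear_inner[OF t_pos m] .
  moreover have "T * (m \<bullet> rat_vec l t) \<noteq> 0" using nz T_ge1 by simp
  ultimately have "\<bar>T * (m \<bullet> rat_vec l t)\<bar> \<ge> 1" by (rule Ints_nonzero_abs_ge1)
  then show ?thesis using T_ge1 unfolding T_def[symmetric] by (simp add: abs_mult field_simps)
qed

lemma is_norm_pos:
  assumes "is_norm N" and "x \<noteq> 0"
  shows "N x > 0"
  using assms by (metis is_norm_def order_le_less)

(* The Diophantine hypothesis, assumed only up to norm R0, holds for all nonresonant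
   integer vectors: beyond R0 the bound a0 |m|^-b0 falls below the gap 1/T. *)
lemma dioph_all_norms:
  fixes N :: "real ^ 'n::finite \<Rightarrow> real" and l t :: "'n \<Rightarrow> int" and a0 b0 R0 :: real
  assumes normN: "is_norm N" and t_pos: "\<forall>j. t j \<ge> 1"
    and a0: "0 < a0" "a0 < 1" and b0: "0 < b0"
    and R0: "R0 > 0" "R0 powr b0 > real_of_int (\<Prod>j\<in>UNIV. t j)"
    and dioph: "\<forall>n \<in> int_vecs. 0 < N n \<and> N n \<le> R0 \<longrightarrow>
        \<bar>n \<bullet> rat_vec l t\<bar> \<ge> a0 * N n powr (- b0)"
    and m: "m \<in> int_vecs" and nz: "m \<bullet> rat_vec l t \<noteq> 0"
  shows "\<bar>m \<bullet> rat_vec l t\<bar> \<ge> a0 * N m powr (- b0)"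
proof (cases "N m \<le> R0")
  case True
  have "m \<noteq> 0" using nz by auto
  then have "N m > 0" using is_norm_pos[OF normN] by blast
  with True show ?thesis using dioph m by blast
next
  case False
  have "a0 * N m powr (- b0) \<le> N m powr (- b0)" using a0 by (intro mult_left_le_one_le) auto
  also have "\<dots> \<le> R0 powr (- b0)" using False R0 b0 by (intro powr_mono2') auto
  also have "\<dots> = 1 / R0 powr b0" by (simp add: powr_minus divide_inverse)
  also have "\<dots> < 1 / real_of_int (\<Prod>j\<in>UNIV. t j)"
  proof -
    have "(\<Prod>j\<in>UNIV. t j) > 0" using t_pos by (intro prod_pos) (meson zero_less_one order.strict_trans2)
    then have "real_of_int (\<Prod>j\<in>UNIV. t j) > 0" by (simp only: of_int_0_less_iff)
    then show ?thesis using R0 by (intro divide_strict_left_mono mult_pos_pos) auto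
  qed
  also have "\<dots> \<le> \<bar>m \<bullet> rat_vec l t\<bar>" using rational_inner_gap[OF t_pos m nz] .
  finally show ?thesis by simp
qed

lemma mem_coset_of:
  assumes "n0 \<in> int_vecs"
  shows "m \<in> coset_of \<omega> n0 \<longleftrightarrow> m \<in> int_vecs \<and> m \<bullet> \<omega> = n0 \<bullet> \<omega>"
  using assms by (auto simp: coset_of_def resonant_def int_vecs_def inner_diff_left)

lemma coset_val_coset_of:
  assumes "n0 \<in> int_vecs"
  shows "coset_val \<omega> (coset_of \<omega> n0) = n0 \<bullet> \<omega>"
proof -
  have "n0 \<in> coset_of \<omega> n0" using mem_coset_of[OF assms] assms by simp
  then show ?thesis
    unfolding coset_val_def using someI mem_coset_of[OF assms] by metis
qed

lemma coset_of_resonant: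
  assumes "n0 \<in> int_vecs" and "n0 \<bullet> \<omega> = 0"
  shows "coset_of \<omega> n0 = resonant \<omega>"
  using assms mem_coset_of[OF assms(1)] by (auto simp: resonant_def)

(* A lower bound a y^-b <= w valid on a set of positive reals passes to its infimum:
   the bound says every element is at least x = (w/a)^(-1/b) > 0, hence so is the
   infimum, and y |-> a y^-b is decreasing on positive reals. *)
lemma powr_bound_Inf:
  fixes S :: "real set" and a b w :: real
  assumes S: "S \<noteq> {}" "\<forall>y\<in>S. y > 0" and a: "a > 0" and b: "b > 0"
    and bound: "\<forall>y\<in>S. a * y powr (- b) \<le> w"
  shows "a * Inf S powr (- b) \<le> w"
proof -
  obtain y0 where y0: "y0 \<in> S" using S by auto
  have w_pos: "w > 0"
  proof -
    have "0 < y0 powr (- b)" using y0 S(2) by fastforce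
    then have "0 < a * y0 powr (- b)" using a by simp
    also have "\<dots> \<le> w" using bound y0 by blast
    finally show ?thesis .
  qed
  define x where "x = (w / a) powr (- 1 / b)"
  have x_pos: "x > 0" using w_pos a by (simp add: x_def)
  have x_powr: "x powr (- b) = w / a" using w_pos a b by (simp add: x_def powr_powr)
  have "x \<le> Inf S"
  proof (rule cInf_greatest[OF S(1)])
    fix y assume y: "y \<in> S"
    have "y powr (- b) \<le> w / a" using bound y a by (simp add: field_simps)
    then have "(w / a) powr (- 1 / b) \<le> (y powr (- b)) powr (- 1 / b)"
      using y S b by (intro powr_mono2') auto
    also have "\<dots> = y" using y S b by (simp add: powr_powr less_imp_le)
    finally show "x \<le> y" by (simp add: x_def)
  qed
  then have "Inf S powr (- b) \<le> x powr (- b)" using x_pos b by (intro powr_mono2') auto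
  then have "Inf S powr (- b) \<le> w / a" using x_powr by simp
  then show ?thesis using a by (simp add: field_simps)
qed

theorem mainTheorem8:
  fixes N :: "real ^ 'n \<Rightarrow> real"
    and l t :: "'n \<Rightarrow> int"
    and a0 b0 R0 :: real
  assumes normN: "is_norm N"
    and t_pos: "\<forall>j. t j \<ge> 1"
    and omega_nz: "(\<chi> j. real_of_int (l j) / real_of_int (t j)) \<noteq> 0"
    and a0: "0 < a0" "a0 < 1"
    and b0: "real CARD('n) < b0"
    and R0: "R0 > 0" "R0 powr b0 > real_of_int (\<Prod>j\<in>UNIV. t j)"
    and dioph: "\<forall>n \<in> int_vecs. 0 < N n \<and> N n \<le> R0 \<longrightarrow>
        \<bar>n \<bullet> (\<chi> j. real_of_int (l j) / real_of_int (t j))\<bar> \<ge> a0 * N n powr (- b0)"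
  shows "\<forall>C \<in> quot (\<chi> j. real_of_int (l j) / real_of_int (t j)).
           C \<noteq> resonant (\<chi> j. real_of_int (l j) / real_of_int (t j)) \<longrightarrow>
           \<bar>coset_val (\<chi> j. real_of_int (l j) / real_of_int (t j)) C\<bar>
             \<ge> a0 * coset_norm N C powr (- b0)"
proof (intro ballI impI)
  fix C assume "C \<in> quot (rat_vec l t)" and C_nz: "C \<noteq> resonant (rat_vec l t)"
  then obtain n0 where n0: "n0 \<in> int_vecs" and C: "C = coset_of (rat_vec l t) n0"
    by (auto simp: quot_def)
  define v where "v = n0 \<bullet> rat_vec l t"
  have v_nz: "v \<noteq> 0" using coset_of_resonant[OF n0] C C_nz by (auto simp: v_def)
  have "real CARD('n) > 0" by simp
  then have b0_pos: "b0 > 0" using b0 by linarith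
  have bound: "\<forall>y \<in> N ` C. a0 * y powr (- b0) \<le> \<bar>v\<bar>"
  proof
    fix y assume "y \<in> N ` C"
    then obtain m where "m \<in> C" and y: "y = N m" by auto
    then have m: "m \<in> int_vecs" and mv: "m \<bullet> rat_vec l t = v"
      by (simp_all add: C mem_coset_of[OF n0] v_def)
    show "a0 * y powr (- b0) \<le> \<bar>v\<bar>"
      using dioph_all_norms[OF normN t_pos a0 b0_pos R0 dioph m] v_nz y mv by simp
  qed
  have "\<forall>y \<in> N ` C. y > 0"
  proof
    fix y assume "y \<in> N ` C"
    then obtain m where "m \<in> C" and y: "y = N m" by auto
    then have "m \<bullet> rat_vec l t \<noteq> 0" using v_nz by (simp add: C mem_coset_of[OF n0] v_def)
    then have "m \<noteq> 0" by auto
    then show "y > 0" using is_norm_pos[OF normN] y by simp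
  qed
  moreover have "N ` C \<noteq> {}" using n0 by (auto simp: C mem_coset_of[OF n0])
  ultimately have "a0 * Inf (N ` C) powr (- b0) \<le> \<bar>v\<bar>"
    using a0(1) b0_pos bound by (intro powr_bound_Inf)
  then show "\<bar>coset_val (rat_vec l t) C\<bar> \<ge> a0 * coset_norm N C powr (- b0)"
    by (simp add: coset_norm_def C coset_val_coset_of[OF n0] v_def)
qed

end
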